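(* Let $f$ be a min-tradeoff function, let $\mathrm{rate}$ be a convex rate function, and let $\alpha\in(1,2)$. Then the optimisation $$\inf_{p\in\mathcal{Q}}\Big(\Delta(f,p)-(\alpha-1)V(f,p)-(\alpha-1)^2K_\alpha(f)\Big)$$ is a convex optimisation problem, i.e. $\mathcal{Q}$ is a convex set and the objective $p\mapsto \Delta(f,p)-(\alpha-1)V(f,p)-(\alpha-1)^2K_\alpha(f)$ is a convex function on $\mathcal{Q}$.
   Context: Fix finite alphabets $\mathcal{A},\mathcal{B},\mathcal{X}$ and a function $x:\mathcal{A}\times\mathcal{B}\to\mathcal{X}$; let $d_A=|\mathcal{A}|$. An EAT channel acting on a finite-dimensional system $R$ is a channel $\mathcal{M}(\rho)=\sum_{a,b}|a\rangle\langle a|_A\otimes|b\rangle\langle b|_B\otimes|x(a,b)\rangle\langle x(a,b)|_X\otimes\mathcal{M}^{ab}(\rho)$ with each $\mathcal{M}^{ab}$ completely positive, trace non-increasing, and $\sum_{ab}\mathcal{M}^{ab}$ trace preserving. $\mathcal{Q}$ is the set of distributions $q$ on $\mathcal{X}$ that arise as the distribution of the register $X$ of $\mathcal{M}(\omega_{RR'})$ for some EAT channel $\mathcal{M}$ on $R$ and state $\omega_{RR'}$ ($R'$ arbitrary finite-dimensional, untouched by $\mathcal{M}$); $\Gamma(q)$ is the set of such pairs achieving $q$. A rate function is a function $\mathrm{rate}:\mathcal{Q}\to\mathbb{R}$ with $\mathrm{rate}(q)\le\inf_{(\omega,\mathcal{M})\in\Gamma(q)}H(A|BR')_{\mathcal{M}(\omega)}$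 for all $q\in\mathcal{Q}$ (conditional von Neumann entropy); a min-tradeoff function $f$ is an affine rate function, extended affinely to all probability distributions on $\mathcal{X}$. Writing $\delta_x$ for the point distribution at $x$: $\Delta(f,p):=\mathrm{rate}(p)-f(p)$; $\mathrm{Var}_p(f):=\sum_x p(x)\big(f(\delta_x)-\sum_{y}p(y)f(\delta_y)\big)^2$; $V(f,p):=\frac{\ln 2}{2}\big(\log(1+2d_A^2)+\sqrt{2+\mathrm{Var}_p(f)}\big)^2$ ($\log$ is base 2); $\mathrm{Max}(f):=\max_{p}f(p)$ over all distributions $p$ on $\mathcal{X}$; $\mathrm{Min}_{\mathcal{Q}}(f):=\inf_{p\in\mathcal{Q}}f(p)$; and $K_\alpha(f):=\frac{1}{6(2-\alpha)^3\ln 2}2^{(\alpha-1)(\log d_A+\mathrm{Max}(f)-\mathrm{Min}_{\mathcal{Q}}(f))}\ln^3\big(2^{\log d_A+\mathrm{Max}(f)-\mathrm{Min}_{\mathcal{Q}}(f)}+e^2\big)$, a constant independent of $p$. *)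

theory Defs
  imports "HOL-Analysis.Analysis" "Jordan_Normal_Form.Char_Poly"
begin

definition mtrace :: "complex mat \<Rightarrow> complex" where
  "mtrace A = (\<Sum>i<dim_row A. A $$ (i, i))"

definition psd :: "nat \<Rightarrow> complex mat \<Rightarrow> bool" where
  "psd n A \<longleftrightarrow> A \<in> carrier_mat n n \<and>
     (\<forall>v \<in> carrier_vec n. Im ((A *\<^sub>v v) \<bullet>c v) = 0 \<and> 0 \<le> Re ((A *\<^sub>v v) \<bullet>c v))"

definition density :: "nat \<Rightarrow> complex mat \<Rightarrow> bool" where
  "density n A \<longleftrightarrow> psd n A \<and> mtrace A = 1"

definition eigvals :: "complex mat \<Rightarrow> complex list" where
  "eigvals A = (SOME as. char_poly A = (\<Prod>a\<leftarrow>as. [:- a, 1:]) \<and> length as = dim_row A)"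

text \<open>von Neumann entropy (base 2), with the convention 0 log 0 = 0.\<close>
definition vN_entropy :: "complex mat \<Rightarrow> real" where
  "vN_entropy A = - (\<Sum>a\<leftarrow>eigvals A. (if Re a = 0 then 0 else Re a * log 2 (Re a)))"

text \<open>Bipartite system P (dimension dP) tensor S (dimension dS): basis index p*dS + s.
  The (i,j) block (w.r.t. the first factor) of an operator on P tensor S.\<close>
definition block :: "nat \<Rightarrow> complex mat \<Rightarrow> nat \<Rightarrow> nat \<Rightarrow> complex mat" where
  "block dS \<rho> i j = mat dS dS (\<lambda>(r, s). \<rho> $$ (i * dS + r, j * dS + s))"

text \<open>(id_P tensor \<Phi>)(\<rho>) for \<rho> on P tensor S, \<Phi> a map from S (dim dIn) to an output system (dim dOut).\<close>
definition id_tensor :: "nat \<Rightarrow> nat \<Rightarrow> nat \<Rightarrow> (complex mat \<Rightarrow> complex mat) \<Rightarrow> complex mat \<Rightarrow> complex mat" where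
  "id_tensor dP dIn dOut \<Phi> \<rho> = mat (dP * dOut) (dP * dOut)
     (\<lambda>(i, j). \<Phi> (block dIn \<rho> (i div dOut) (j div dOut)) $$ (i mod dOut, j mod dOut))"

definition ptrace2 :: "nat \<Rightarrow> nat \<Rightarrow> complex mat \<Rightarrow> complex mat" where
  "ptrace2 dP dS \<rho> = mat dP dP (\<lambda>(i, j). \<Sum>k<dS. \<rho> $$ (i * dS + k, j * dS + k))"

definition linear_map :: "nat \<Rightarrow> nat \<Rightarrow> (complex mat \<Rightarrow> complex mat) \<Rightarrow> bool" where
  "linear_map dIn dOut \<Phi> \<longleftrightarrow>
     (\<forall>A \<in> carrier_mat dIn dIn. \<Phi> A \<in> carrier_mat dOut dOut) \<and>
     (\<forall>A \<in> carrier_mat dIn dIn. \<forall>B \<in> carrier_mat dIn dIn. \<Phi> (A + B) = \<Phi> A + \<Phi> B) \<and>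
     (\<forall>A \<in> carrier_mat dIn dIn. \<forall>c. \<Phi> (c \<cdot>\<^sub>m A) = c \<cdot>\<^sub>m \<Phi> A)"

definition completely_positive :: "nat \<Rightarrow> nat \<Rightarrow> (complex mat \<Rightarrow> complex mat) \<Rightarrow> bool" where
  "completely_positive dIn dOut \<Phi> \<longleftrightarrow> linear_map dIn dOut \<Phi> \<and>
     (\<forall>k \<rho>. psd (k * dIn) \<rho> \<longrightarrow> psd (k * dOut) (id_tensor k dIn dOut \<Phi> \<rho>))"

definition trace_nonincreasing :: "nat \<Rightarrow> (complex mat \<Rightarrow> complex mat) \<Rightarrow> bool" where
  "trace_nonincreasing dIn \<Phi> \<longleftrightarrow> (\<forall>\<rho>. psd dIn \<rho> \<longrightarrow> Re (mtrace (\<Phi> \<rho>)) \<le> Re (mtrace \<rho>))"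

text \<open>Trace preservation of the sum of branches is written as a sum of traces (trace is additive).
  An EAT channel on R (dimension dR) with output system of dimension dOut, given by
  its family of branches M^{ab}, a < dA, b < dB (alphabets A = {0..<dA}, B = {0..<dB}).\<close>
definition EAT_channel :: "nat \<Rightarrow> nat \<Rightarrow> nat \<Rightarrow> nat \<Rightarrow> (nat \<Rightarrow> nat \<Rightarrow> complex mat \<Rightarrow> complex mat) \<Rightarrow> bool" where
  "EAT_channel dA dB dR dOut M \<longleftrightarrow>
     (\<forall>a<dA. \<forall>b<dB. completely_positive dR dOut (M a b) \<and> trace_nonincreasing dR (M a b)) \<and>
     (\<forall>\<rho> \<in> carrier_mat dR dR. (\<Sum>a<dA. \<Sum>b<dB. mtrace (M a b \<rho>)) = mtrace \<rho>)"

text \<open>The joint state omega lives on R' tensor R (dimensions dR', dR); the channel acts on R.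
  sigma_ab = tr_Out((id_{R'} tensor M^{ab})(omega)), an operator on R'.\<close>
definition branch_state :: "nat \<Rightarrow> nat \<Rightarrow> nat \<Rightarrow> (nat \<Rightarrow> nat \<Rightarrow> complex mat \<Rightarrow> complex mat)
    \<Rightarrow> complex mat \<Rightarrow> nat \<Rightarrow> nat \<Rightarrow> complex mat" where
  "branch_state dR dR' dOut M \<omega> a b = ptrace2 dR' dOut (id_tensor dR' dR dOut (M a b) \<omega>)"

definition X_dist :: "nat \<Rightarrow> nat \<Rightarrow> (nat \<Rightarrow> nat \<Rightarrow> 'x::finite) \<Rightarrow> nat \<Rightarrow> nat \<Rightarrow> nat
    \<Rightarrow> (nat \<Rightarrow> nat \<Rightarrow> complex mat \<Rightarrow> complex mat) \<Rightarrow> complex mat \<Rightarrow> real^'x" where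
  "X_dist dA dB xf dR dR' dOut M \<omega> = (\<chi> x. \<Sum>a<dA. \<Sum>b<dB.
      if xf a b = x then Re (mtrace (id_tensor dR' dR dOut (M a b) \<omega>)) else 0)"

text \<open>Marginal of M(omega) on A B R' (block diagonal in the classical registers, basis index (a*dB+b)*dR'+r).\<close>
definition ABR'_state :: "nat \<Rightarrow> nat \<Rightarrow> nat \<Rightarrow> (nat \<Rightarrow> nat \<Rightarrow> complex mat) \<Rightarrow> complex mat" where
  "ABR'_state dA dB dR' \<sigma> = mat (dA * dB * dR') (dA * dB * dR') (\<lambda>(i, j).
     if i div dR' = j div dR'
     then \<sigma> (i div dR' div dB) (i div dR' mod dB) $$ (i mod dR', j mod dR') else 0)"

text \<open>Marginal of M(omega) on B R' (basis index b*dR'+r).\<close>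
definition BR'_state :: "nat \<Rightarrow> nat \<Rightarrow> nat \<Rightarrow> (nat \<Rightarrow> nat \<Rightarrow> complex mat) \<Rightarrow> complex mat" where
  "BR'_state dA dB dR' \<sigma> = mat (dB * dR') (dB * dR') (\<lambda>(i, j).
     if i div dR' = j div dR'
     then (\<Sum>a<dA. \<sigma> a (i div dR') $$ (i mod dR', j mod dR')) else 0)"

definition cond_entropy :: "nat \<Rightarrow> nat \<Rightarrow> nat \<Rightarrow> nat \<Rightarrow> nat
    \<Rightarrow> (nat \<Rightarrow> nat \<Rightarrow> complex mat \<Rightarrow> complex mat) \<Rightarrow> complex mat \<Rightarrow> real" where
  "cond_entropy dA dB dR dR' dOut M \<omega> =
     vN_entropy (ABR'_state dA dB dR' (branch_state dR dR' dOut M \<omega>))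
     - vN_entropy (BR'_state dA dB dR' (branch_state dR dR' dOut M \<omega>))"

definition admissible :: "nat \<Rightarrow> nat \<Rightarrow> nat \<Rightarrow> nat \<Rightarrow> nat
    \<Rightarrow> (nat \<Rightarrow> nat \<Rightarrow> complex mat \<Rightarrow> complex mat) \<Rightarrow> complex mat \<Rightarrow> bool" where
  "admissible dA dB dR dR' dOut M \<omega> \<longleftrightarrow>
     EAT_channel dA dB dR dOut M \<and> density (dR' * dR) \<omega>"

definition QSet :: "nat \<Rightarrow> nat \<Rightarrow> (nat \<Rightarrow> nat \<Rightarrow> 'x::finite) \<Rightarrow> (real^'x) set" where
  "QSet dA dB xf = {q. \<exists>dR dR' dOut M \<omega>. admissible dA dB dR dR' dOut M \<omega> \<and>
       X_dist dA dB xf dR dR' dOut M \<omega> = q}"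

definition is_rate_function :: "nat \<Rightarrow> nat \<Rightarrow> (nat \<Rightarrow> nat \<Rightarrow> 'x::finite) \<Rightarrow> (real^'x \<Rightarrow> real) \<Rightarrow> bool" where
  "is_rate_function dA dB xf r \<longleftrightarrow>
     (\<forall>q \<in> QSet dA dB xf. \<forall>dR dR' dOut M \<omega>.
        admissible dA dB dR dR' dOut M \<omega> \<and> X_dist dA dB xf dR dR' dOut M \<omega> = q
        \<longrightarrow> r q \<le> cond_entropy dA dB dR dR' dOut M \<omega>)"

definition convex_rate :: "nat \<Rightarrow> nat \<Rightarrow> (nat \<Rightarrow> nat \<Rightarrow> 'x::finite) \<Rightarrow> (real^'x \<Rightarrow> real) \<Rightarrow> bool" where
  "convex_rate dA dB xf r \<longleftrightarrow>
     (\<forall>p \<in> QSet dA dB xf. \<forall>q \<in> QSet dA dB xf. \<forall>t::real. 0 \<le> t \<and> t \<le> 1 \<and>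
        t *\<^sub>R p + (1 - t) *\<^sub>R q \<in> QSet dA dB xf \<longrightarrow>
        r (t *\<^sub>R p + (1 - t) *\<^sub>R q) \<le> t * r p + (1 - t) * r q)"

definition prob_dists :: "(real^'x::finite) set" where
  "prob_dists = {p. (\<forall>x. 0 \<le> p $ x) \<and> (\<Sum>x\<in>UNIV. p $ x) = 1}"

definition point_dist :: "'x::finite \<Rightarrow> real^'x" where
  "point_dist x = (\<chi> y. if y = x then 1 else 0)"

definition affine_on_dists :: "(real^'x::finite \<Rightarrow> real) \<Rightarrow> bool" where
  "affine_on_dists f \<longleftrightarrow> (\<forall>p \<in> prob_dists. \<forall>q \<in> prob_dists. \<forall>t::real. 0 \<le> t \<and> t \<le> 1 \<longrightarrow>
      f (t *\<^sub>R p + (1 - t) *\<^sub>R q) = t * f p + (1 - t) * f q)"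

definition min_tradeoff :: "nat \<Rightarrow> nat \<Rightarrow> (nat \<Rightarrow> nat \<Rightarrow> 'x::finite) \<Rightarrow> (real^'x \<Rightarrow> real) \<Rightarrow> bool" where
  "min_tradeoff dA dB xf f \<longleftrightarrow> affine_on_dists f \<and> is_rate_function dA dB xf f"

definition Var_f :: "(real^'x::finite \<Rightarrow> real) \<Rightarrow> real^'x \<Rightarrow> real" where
  "Var_f f p = (\<Sum>x\<in>UNIV. p $ x * (f (point_dist x) - (\<Sum>y\<in>UNIV. p $ y * f (point_dist y)))^2)"

definition V_f :: "nat \<Rightarrow> (real^'x::finite \<Rightarrow> real) \<Rightarrow> real^'x \<Rightarrow> real" where
  "V_f dA f p = ln 2 / 2 * (log 2 (1 + 2 * (real dA)^2) + sqrt (2 + Var_f f p))^2"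

definition Max_f :: "(real^'x::finite \<Rightarrow> real) \<Rightarrow> real" where
  "Max_f f = (SUP p \<in> prob_dists. f p)"

definition Min_Q_f :: "nat \<Rightarrow> nat \<Rightarrow> (nat \<Rightarrow> nat \<Rightarrow> 'x::finite) \<Rightarrow> (real^'x \<Rightarrow> real) \<Rightarrow> real" where
  "Min_Q_f dA dB xf f = (INF p \<in> QSet dA dB xf. f p)"

definition K_alpha :: "nat \<Rightarrow> nat \<Rightarrow> (nat \<Rightarrow> nat \<Rightarrow> 'x::finite) \<Rightarrow> real \<Rightarrow> (real^'x \<Rightarrow> real) \<Rightarrow> real" where
  "K_alpha dA dB xf \<alpha> f =
     (let c = log 2 (real dA) + Max_f f - Min_Q_f dA dB xf f in
      1 / (6 * (2 - \<alpha>)^3 * ln 2) * 2 powr ((\<alpha> - 1) * c) * (ln (2 powr c + exp 2))^3)"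

definition Delta_f :: "(real^'x::finite \<Rightarrow> real) \<Rightarrow> (real^'x \<Rightarrow> real) \<Rightarrow> real^'x \<Rightarrow> real" where
  "Delta_f rate f p = rate p - f p"

end

theory Submission
  imports Defs
begin

(* Q is exactly the set of push-forwards under x of probability distributions P on A x B: the
   X-distribution of M(omega) is the push-forward of the branch weights tr M^{ab}(omega), and
   conversely P is realised by the scalar branches M^{ab}(rho) = P(a,b) rho on a one-dimensional R.
   Hence Q is convex. The objective is rate - f - (alpha - 1) V - const with rate convex and f
   affine, so it remains to see that V is concave: Var_p(f) is concave in p (a linear function
   minus the square of a linear function), and V is a concave nondecreasing function of
   w = 2 + Var_p(f), namely (ln 2 / 2) (L + sqrt w)^2 = (ln 2 / 2) (L^2 + 2 L sqrt w + w). *)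

lemma sum_lessThan_mult:
  fixes g :: "nat \<Rightarrow> 'a::comm_monoid_add"
  shows "(\<Sum>i<k * n. g i) = (\<Sum>j<k. \<Sum>r<n. g (j * n + r))"
proof -
  have "(\<Sum>i\<in>{j * n..<j * n + n}. g i) = (\<Sum>r<n. g (j * n + r))" for j
    using sum.shift_bounds_nat_ivl[of g 0 "j * n" n] by (simp add: lessThan_atLeast0 add.commute)
  then show ?thesis
    using sum.nat_group[of g n k] by (simp add: mult.commute)
qed

lemma psd_diag_nonneg:
  assumes "psd n A" and "i < n"
  shows "0 \<le> Re (A $$ (i, i))"
proof -
  have A: "A \<in> carrier_mat n n"
    using assms(1) unfolding psd_def by auto
  have "(A *\<^sub>v unit_vec n i) \<bullet>c unit_vec n i = A $$ (i, i)"
    using A assms(2) by (simp add: scalar_prod_def mult_mat_vec_def unit_vec_def conjugate_vec_def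
        if_distrib[where f="\<lambda>x. _ * x"] if_distrib[where f=cnj] sum.If_cases)
  moreover have "0 \<le> Re ((A *\<^sub>v unit_vec n i) \<bullet>c unit_vec n i)"
    using assms unfolding psd_def by auto
  ultimately show ?thesis
    by simp
qed

lemma psd_mtrace_nonneg:
  assumes "psd n A"
  shows "0 \<le> Re (mtrace A)"
proof -
  have "A \<in> carrier_mat n n"
    using assms unfolding psd_def by auto
  then show ?thesis
    unfolding mtrace_def using psd_diag_nonneg[OF assms] by (auto simp: Re_sum intro!: sum_nonneg)
qed

lemma mtrace_block_diag:
  assumes "\<rho> \<in> carrier_mat (k * n) (k * n)"
  shows "mtrace \<rho> = (\<Sum>j<k. mtrace (block n \<rho> j j))"
  using assms unfolding mtrace_def block_def by (simp add: sum_lessThan_mult)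

lemma mtrace_id_tensor:
  assumes "\<And>j. j < k \<Longrightarrow> \<Phi> (block dIn \<rho> j j) \<in> carrier_mat dOut dOut"
  shows "mtrace (id_tensor k dIn dOut \<Phi> \<rho>) = (\<Sum>j<k. mtrace (\<Phi> (block dIn \<rho> j j)))"
proof -
  have "mtrace (id_tensor k dIn dOut \<Phi> \<rho>)
      = (\<Sum>i<k * dOut. \<Phi> (block dIn \<rho> (i div dOut) (i div dOut)) $$ (i mod dOut, i mod dOut))"
    unfolding mtrace_def id_tensor_def by (simp add: mult.commute)
  also have "\<dots> = (\<Sum>j<k. \<Sum>r<dOut. \<Phi> (block dIn \<rho> j j) $$ (r, r))"
    by (subst sum_lessThan_mult) (auto intro!: sum.cong)
  also have "\<dots> = (\<Sum>j<k. mtrace (\<Phi> (block dIn \<rho> j j)))"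
    unfolding mtrace_def using assms by (auto intro!: sum.cong)
  finally show ?thesis .
qed

lemma mtrace_smult:
  assumes "A \<in> carrier_mat n n"
  shows "mtrace (c \<cdot>\<^sub>m A) = c * mtrace A"
  using assms unfolding mtrace_def by (simp add: sum_distrib_left)

lemma psd_smult:
  assumes "psd n A" and "0 \<le> c"
  shows "psd n (complex_of_real c \<cdot>\<^sub>m A)"
proof -
  have "((d \<cdot>\<^sub>m A) *\<^sub>v v) \<bullet>c v = d * ((A *\<^sub>v v) \<bullet>c v)" if "v \<in> carrier_vec n" for d v
  proof -
    have "A \<in> carrier_mat n n"
      using assms(1) unfolding psd_def by auto
    then have "(d \<cdot>\<^sub>m A) *\<^sub>v v = d \<cdot>\<^sub>v (A *\<^sub>v v)" and "A *\<^sub>v v \<in> carrier_vec n"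
      using that by (auto intro!: eq_vecI simp: mult_mat_vec_def scalar_prod_def sum_distrib_left mult.assoc)
    then show ?thesis
      using that by (simp add: smult_scalar_prod_distrib[of _ n])
  qed
  then show ?thesis
    using assms unfolding psd_def by auto
qed

lemma density_one_dim: "density 1 (1\<^sub>m 1)"
proof -
  have "(1\<^sub>m 1 *\<^sub>v v) \<bullet>c v \<ge> 0" if "v \<in> carrier_vec 1" for v :: "complex vec"
    using that conjugate_square_ge_0_vec[of v] by simp
  then show ?thesis
    unfolding density_def psd_def by (auto simp: less_eq_complex_def mtrace_def)
qed

lemma id_tensor_one_dim_smult:
  assumes "\<rho> \<in> carrier_mat k k"
  shows "id_tensor k 1 1 (\<lambda>\<sigma>. c \<cdot>\<^sub>m \<sigma>) \<rho> = c \<cdot>\<^sub>m \<rho>"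
  using assms by (intro eq_matI) (auto simp: id_tensor_def block_def)

lemma completely_positive_one_dim_smult:
  assumes "0 \<le> c"
  shows "completely_positive 1 1 (\<lambda>\<rho>. complex_of_real c \<cdot>\<^sub>m \<rho>)"
  unfolding completely_positive_def linear_map_def
proof (intro conjI ballI allI impI)
  fix k \<rho> assume "psd (k * 1) \<rho>"
  then show "psd (k * 1) (id_tensor k 1 1 (\<lambda>\<rho>. complex_of_real c \<cdot>\<^sub>m \<rho>) \<rho>)"
    using id_tensor_one_dim_smult psd_smult assms unfolding psd_def by auto
qed (auto intro!: eq_matI simp: add_smult_distrib_left_mat)

lemma trace_nonincreasing_smult:
  assumes "0 \<le> c" and "c \<le> 1"
  shows "trace_nonincreasing n (\<lambda>\<rho>. complex_of_real c \<cdot>\<^sub>m \<rho>)"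
  unfolding trace_nonincreasing_def
proof (intro allI impI)
  fix \<rho> assume "psd n \<rho>"
  then have "\<rho> \<in> carrier_mat n n" and "0 \<le> Re (mtrace \<rho>)"
    using psd_mtrace_nonneg unfolding psd_def by auto
  then show "Re (mtrace (complex_of_real c \<cdot>\<^sub>m \<rho>)) \<le> Re (mtrace \<rho>)"
    using assms by (simp add: mtrace_smult mult_left_le_one_le)
qed

definition joint_dists :: "nat \<Rightarrow> nat \<Rightarrow> (nat \<Rightarrow> nat \<Rightarrow> real) set" where
  "joint_dists dA dB = {P. (\<forall>a<dA. \<forall>b<dB. 0 \<le> P a b) \<and> (\<Sum>a<dA. \<Sum>b<dB. P a b) = 1}"

definition push_dist :: "nat \<Rightarrow> nat \<Rightarrow> (nat \<Rightarrow> nat \<Rightarrow> 'x::finite) \<Rightarrow> (nat \<Rightarrow> nat \<Rightarrow> real) \<Rightarrow> real^'x" where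
  "push_dist dA dB xf P = (\<chi> x. \<Sum>a<dA. \<Sum>b<dB. if xf a b = x then P a b else 0)"

lemma joint_dists_le_one:
  assumes "P \<in> joint_dists dA dB" and "a < dA" and "b < dB"
  shows "P a b \<le> 1"
proof -
  have nonneg: "\<forall>a<dA. \<forall>b<dB. 0 \<le> P a b" and total: "(\<Sum>a<dA. \<Sum>b<dB. P a b) = 1"
    using assms(1) unfolding joint_dists_def by auto
  have "P a b \<le> (\<Sum>b<dB. P a b)"
    using assms(3) nonneg assms(2) by (intro member_le_sum) auto
  also have "\<dots> \<le> (\<Sum>a<dA. \<Sum>b<dB. P a b)"
    using assms(2) nonneg by (intro member_le_sum[where f="\<lambda>a. \<Sum>b<dB. P a b"] sum_nonneg) auto
  finally show ?thesis
    using total by simp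
qed

lemma joint_dists_convex_comb:
  assumes "P \<in> joint_dists dA dB" and "Q \<in> joint_dists dA dB"
    and "0 \<le> u" and "0 \<le> v" and "u + v = 1"
  shows "(\<lambda>a b. u * P a b + v * Q a b) \<in> joint_dists dA dB"
  using assms unfolding joint_dists_def by (simp add: sum.distrib flip: sum_distrib_left)

lemma push_dist_convex_comb:
  "push_dist dA dB xf (\<lambda>a b. u * P a b + v * Q a b)
     = u *\<^sub>R push_dist dA dB xf P + v *\<^sub>R push_dist dA dB xf Q"
proof -
  have if_comb: "(if c then u * p + v * q else 0) = u * (if c then p else 0) + v * (if c then q else 0)"
    for c and p q :: real
    by simp
  show ?thesis
    unfolding push_dist_def
    by (intro Finite_Cartesian_Product.vec_eq_iff[THEN iffD2] allI) (simp add: if_comb sum.distrib sum_distrib_left)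
qed

lemma push_dist_in_prob_dists:
  assumes "P \<in> joint_dists dA dB"
  shows "push_dist dA dB xf P \<in> prob_dists"
proof -
  have "(\<Sum>x\<in>UNIV. \<Sum>a<dA. \<Sum>b<dB. if xf a b = x then P a b else 0)
      = (\<Sum>a<dA. \<Sum>b<dB. \<Sum>x\<in>UNIV. if xf a b = x then P a b else 0)"
    by (subst sum.swap) (simp add: sum.swap[where A=UNIV])
  then show ?thesis
    using assms unfolding prob_dists_def joint_dists_def push_dist_def by (auto intro!: sum_nonneg)
qed

lemma branch_weights_in_joint_dists:
  assumes "admissible dA dB dR dR' dOut M \<omega>"
  shows "(\<lambda>a b. Re (mtrace (id_tensor dR' dR dOut (M a b) \<omega>))) \<in> joint_dists dA dB"
proof -
  have EAT: "EAT_channel dA dB dR dOut M" and den: "density (dR' * dR) \<omega>"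
    using assms unfolding admissible_def by auto
  have cp: "completely_positive dR dOut (M a b)" if "a < dA" "b < dB" for a b
    using EAT that unfolding EAT_channel_def by auto
  have blocks: "block dR \<omega> j j \<in> carrier_mat dR dR" for j
    by (simp add: block_def)
  have "psd (dR' * dOut) (id_tensor dR' dR dOut (M a b) \<omega>)" if "a < dA" "b < dB" for a b
    using cp[OF that] den unfolding completely_positive_def density_def by auto
  then have nonneg: "\<forall>a<dA. \<forall>b<dB. 0 \<le> Re (mtrace (id_tensor dR' dR dOut (M a b) \<omega>))"
    using psd_mtrace_nonneg by blast
  have "(\<Sum>a<dA. \<Sum>b<dB. mtrace (id_tensor dR' dR dOut (M a b) \<omega>))
      = (\<Sum>a<dA. \<Sum>b<dB. \<Sum>j<dR'. mtrace (M a b (block dR \<omega> j j)))"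
    using cp blocks by (auto intro!: sum.cong mtrace_id_tensor simp: completely_positive_def linear_map_def)
  also have "\<dots> = (\<Sum>j<dR'. \<Sum>a<dA. \<Sum>b<dB. mtrace (M a b (block dR \<omega> j j)))"
    by (simp add: sum.swap[where B="{..<dR'}"])
  also have "\<dots> = (\<Sum>j<dR'. mtrace (block dR \<omega> j j))"
    using EAT blocks unfolding EAT_channel_def by simp
  also have "\<dots> = 1"
    using den mtrace_block_diag[of \<omega> dR' dR] unfolding density_def psd_def by simp
  finally show ?thesis
    using nonneg unfolding joint_dists_def by (simp flip: Re_sum)
qed

lemma admissible_one_dim_smult:
  assumes "P \<in> joint_dists dA dB"
  shows "admissible dA dB 1 1 1 (\<lambda>a b \<rho>. complex_of_real (P a b) \<cdot>\<^sub>m \<rho>) (1\<^sub>m 1)"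
proof -
  have "(\<Sum>a<dA. \<Sum>b<dB. mtrace (complex_of_real (P a b) \<cdot>\<^sub>m \<rho>)) = mtrace \<rho>"
    if "\<rho> \<in> carrier_mat 1 1" for \<rho>
    using assms that unfolding joint_dists_def
    by (simp add: mtrace_smult flip: sum_distrib_right of_real_sum)
  moreover have "completely_positive 1 1 (\<lambda>\<rho>. complex_of_real (P a b) \<cdot>\<^sub>m \<rho>)
      \<and> trace_nonincreasing 1 (\<lambda>\<rho>. complex_of_real (P a b) \<cdot>\<^sub>m \<rho>)"
    if "a < dA" "b < dB" for a b
    using assms that joint_dists_le_one[OF assms] unfolding joint_dists_def
    by (blast intro: completely_positive_one_dim_smult trace_nonincreasing_smult)
  ultimately show ?thesis
    using density_one_dim unfolding admissible_def EAT_channel_def by simp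
qed

lemma QSet_eq_push_dist_image: "QSet dA dB xf = push_dist dA dB xf ` joint_dists dA dB"
proof (intro equalityI subsetI)
  fix q assume "q \<in> QSet dA dB xf"
  then obtain dR dR' dOut M \<omega> where adm: "admissible dA dB dR dR' dOut M \<omega>"
    and q: "q = X_dist dA dB xf dR dR' dOut M \<omega>"
    unfolding QSet_def by blast
  have "q = push_dist dA dB xf (\<lambda>a b. Re (mtrace (id_tensor dR' dR dOut (M a b) \<omega>)))"
    unfolding q X_dist_def push_dist_def ..
  then show "q \<in> push_dist dA dB xf ` joint_dists dA dB"
    using branch_weights_in_joint_dists[OF adm] by blast
next
  fix q assume "q \<in> push_dist dA dB xf ` joint_dists dA dB"
  then obtain P where P: "P \<in> joint_dists dA dB" and q: "q = push_dist dA dB xf P"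
    by blast
  have weights: "Re (mtrace (id_tensor 1 1 1 (\<lambda>\<rho>. complex_of_real (P a b) \<cdot>\<^sub>m \<rho>) (1\<^sub>m 1))) = P a b"
    for a b
    by (subst id_tensor_one_dim_smult) (auto simp: mtrace_def)
  have "X_dist dA dB xf 1 1 1 (\<lambda>a b \<rho>. complex_of_real (P a b) \<cdot>\<^sub>m \<rho>) (1\<^sub>m 1) = q"
    unfolding q X_dist_def push_dist_def weights ..
  then show "q \<in> QSet dA dB xf"
    using admissible_one_dim_smult[OF P] unfolding QSet_def by blast
qed

lemma convex_QSet: "convex (QSet dA dB xf)"
  unfolding QSet_eq_push_dist_image convex_def
  by (auto simp flip: push_dist_convex_comb intro: joint_dists_convex_comb)

lemma QSet_subset_prob_dists: "QSet dA dB xf \<subseteq> prob_dists"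
  unfolding QSet_eq_push_dist_image using push_dist_in_prob_dists by blast

lemma convex_prob_dists: "convex (prob_dists :: (real^'x::finite) set)"
  unfolding convex_def prob_dists_def by (simp add: sum.distrib flip: sum_distrib_left)

lemma convex_on_rate:
  assumes "convex_rate dA dB xf rate"
  shows "convex_on (QSet dA dB xf) rate"
  using assms convex_QSet unfolding convex_rate_def convex_on_def convex_def
  by (metis add_diff_cancel_left' le_add_same_cancel1)

lemma concave_on_affine_on_dists:
  assumes "affine_on_dists f" and "S \<subseteq> prob_dists" and "convex S"
  shows "concave_on S f"
  using assms unfolding affine_on_dists_def concave_on_iff
  by (metis (no_types, lifting) add_diff_cancel_left' le_add_same_cancel1 order_refl subsetD)

lemma concave_on_cong:
  assumes "concave_on S f" and "\<And>x. x \<in> S \<Longrightarrow> f x = g x"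
  shows "concave_on S g"
  using assms convexD[OF concave_on_imp_convex[OF assms(1)]] unfolding concave_on_iff by simp

lemma power2_convex_comb_le:
  fixes a b u v :: real
  assumes "0 \<le> u" and "0 \<le> v" and "u + v = 1"
  shows "(u * a + v * b)\<^sup>2 \<le> u * a\<^sup>2 + v * b\<^sup>2"
proof -
  have v: "v = 1 - u"
    using assms(3) by simp
  have "u * a\<^sup>2 + v * b\<^sup>2 - (u * a + v * b)\<^sup>2 = u * v * (a - b)\<^sup>2"
    unfolding v by (simp add: algebra_simps power2_eq_square)
  moreover have "0 \<le> u * v * (a - b)\<^sup>2"
    using assms by simp
  ultimately show ?thesis
    by linarith
qed

lemma concave_on_sqrt: "concave_on {0..} sqrt"
  unfolding concave_on_iff
proof (intro conjI ballI allI impI convex_real_interval)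
  fix x y :: real and u v :: real
  assume "x \<in> {0..}" "y \<in> {0..}" and uv: "0 \<le> u" "0 \<le> v" "u + v = 1"
  have "(u * sqrt x + v * sqrt y)\<^sup>2 \<le> u * (sqrt x)\<^sup>2 + v * (sqrt y)\<^sup>2"
    using uv by (rule power2_convex_comb_le)
  also have "\<dots> = u * x + v * y"
    using \<open>x \<in> {0..}\<close> \<open>y \<in> {0..}\<close> by simp
  finally show "u * sqrt x + v * sqrt y \<le> sqrt (u *\<^sub>R x + v *\<^sub>R y)"
    by (simp add: real_le_rsqrt)
qed

lemma concave_on_mono_compose:
  assumes g: "concave_on S g" and h: "concave_on T h" and "mono_on T h" and "g ` S \<subseteq> T"
  shows "concave_on S (\<lambda>x. h (g x))"
  unfolding concave_on_iff
proof (intro conjI ballI allI impI)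
  show "convex S"
    using g by (rule concave_on_imp_convex)
  fix x y and u v :: real assume xy: "x \<in> S" "y \<in> S" and uv: "0 \<le> u" "0 \<le> v" "u + v = 1"
  have gT: "g x \<in> T" "g y \<in> T" "g (u *\<^sub>R x + v *\<^sub>R y) \<in> T"
    using assms(4) convexD[OF \<open>convex S\<close> xy uv] xy by auto
  have combT: "u * g x + v * g y \<in> T"
    using convexD[OF concave_on_imp_convex[OF h] gT(1,2) uv] by simp
  have "u * h (g x) + v * h (g y) \<le> h (u * g x + v * g y)"
    using h gT uv unfolding concave_on_iff by simp
  also have "\<dots> \<le> h (g (u *\<^sub>R x + v *\<^sub>R y))"
    using g xy uv unfolding concave_on_iff by (intro mono_onD[OF \<open>mono_on T h\<close> combT gT(3)]) simp
  finally show "u * h (g x) + v * h (g y) \<le> h (g (u *\<^sub>R x + v *\<^sub>R y))" .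
qed

lemma Var_f_nonneg:
  assumes "p \<in> prob_dists"
  shows "0 \<le> Var_f f p"
  using assms unfolding Var_f_def prob_dists_def by (auto intro!: sum_nonneg)

lemma Var_f_eq_moments:
  assumes "p \<in> prob_dists"
  shows "Var_f f p = (\<Sum>x\<in>UNIV. p $ x * (f (point_dist x))\<^sup>2) - (\<Sum>x\<in>UNIV. p $ x * f (point_dist x))\<^sup>2"
proof -
  define m where "m = (\<Sum>x\<in>UNIV. p $ x * f (point_dist x))"
  have total: "(\<Sum>x\<in>UNIV. p $ x) = 1"
    using assms unfolding prob_dists_def by auto
  have "Var_f f p = (\<Sum>x\<in>UNIV. p $ x * (f (point_dist x))\<^sup>2 - 2 * m * (p $ x * f (point_dist x)) + m\<^sup>2 * p $ x)"
    unfolding Var_f_def m_def[symmetric] by (rule sum.cong) (simp_all add: power2_diff algebra_simps)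
  also have "\<dots> = (\<Sum>x\<in>UNIV. p $ x * (f (point_dist x))\<^sup>2) - 2 * m * m + m\<^sup>2"
    by (simp add: sum.distrib sum_subtractf total m_def flip: sum_distrib_left)
  finally show ?thesis
    unfolding m_def by (simp add: power2_eq_square)
qed

lemma concave_on_Var_f: "concave_on prob_dists (Var_f f)"
  unfolding concave_on_iff
proof (intro conjI ballI allI impI convex_prob_dists)
  fix p q :: "real^'a" and u v :: real
  assume p: "p \<in> prob_dists" and q: "q \<in> prob_dists" and uv: "0 \<le> u" "0 \<le> v" "u + v = 1"
  define S where "S r = (\<Sum>x\<in>UNIV. r $ x * (f (point_dist x))\<^sup>2)" for r :: "real^'a"
  define m where "m r = (\<Sum>x\<in>UNIV. r $ x * f (point_dist x))" for r :: "real^'a"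
  have pq: "u *\<^sub>R p + v *\<^sub>R q \<in> prob_dists"
    using convex_prob_dists p q uv by (rule convexD)
  have linear: "S (u *\<^sub>R p + v *\<^sub>R q) = u * S p + v * S q" "m (u *\<^sub>R p + v *\<^sub>R q) = u * m p + v * m q"
    unfolding S_def m_def by (simp_all add: sum.distrib sum_distrib_left algebra_simps)
  have Var: "Var_f f r = S r - (m r)\<^sup>2" if "r \<in> prob_dists" for r
    using Var_f_eq_moments[OF that] unfolding S_def m_def .
  have "(u * m p + v * m q)\<^sup>2 \<le> u * (m p)\<^sup>2 + v * (m q)\<^sup>2"
    using uv by (rule power2_convex_comb_le)
  moreover have "u * Var_f f p + v * Var_f f q = u * S p + v * S q - (u * (m p)\<^sup>2 + v * (m q)\<^sup>2)"
    unfolding Var[OF p] Var[OF q] by (simp add: algebra_simps)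
  ultimately show "u * Var_f f p + v * Var_f f q \<le> Var_f f (u *\<^sub>R p + v *\<^sub>R q)"
    unfolding Var[OF pq] linear by linarith
qed

lemma concave_on_V_f: "concave_on prob_dists (V_f dA f)"
proof -
  define L where "L = log 2 (1 + 2 * (real dA)\<^sup>2)"
  define h where "h = (\<lambda>w. L\<^sup>2 + w + 2 * L * sqrt w)"
  have "0 \<le> L"
    unfolding L_def by (subst zero_le_log_cancel_iff) (auto intro: add_pos_nonneg)
  have "concave_on {0..} (\<lambda>w. L\<^sup>2 + w)"
    by (intro concave_on_add) (simp_all add: concave_on_const concave_on_ident)
  moreover have "concave_on {0..} (\<lambda>w. 2 * L * sqrt w)"
    using \<open>0 \<le> L\<close> concave_on_sqrt by (intro concave_on_cmul) simp_all
  ultimately have h_concave: "concave_on {0..} h"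
    unfolding h_def by (rule concave_on_add)
  have h_mono: "mono_on {0..} h"
    unfolding h_def mono_on_def using \<open>0 \<le> L\<close> by (auto intro!: add_mono mult_left_mono)
  have "concave_on prob_dists (\<lambda>p. 2 + Var_f f p)"
    using concave_on_add[OF concave_on_const[THEN iffD2, OF convex_prob_dists] concave_on_Var_f] .
  moreover have "(\<lambda>p. 2 + Var_f f p) ` prob_dists \<subseteq> {0..}"
    using Var_f_nonneg by fastforce
  ultimately have "concave_on prob_dists (\<lambda>p. ln 2 / 2 * h (2 + Var_f f p))"
    by (intro concave_on_cmul concave_on_mono_compose[OF _ h_concave h_mono]) simp_all
  moreover have "ln 2 / 2 * h (2 + Var_f f p) = V_f dA f p" if "p \<in> prob_dists" for p
    using Var_f_nonneg[OF that] unfolding V_f_def h_def L_def[symmetric] by (simp add: power2_sum)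
  ultimately show ?thesis
    by (rule concave_on_cong)
qed

theorem mainTheorem3:
  fixes dA dB :: nat and xf :: "nat \<Rightarrow> nat \<Rightarrow> 'x::finite"
    and f rate :: "real^'x \<Rightarrow> real" and \<alpha> :: real
  assumes "min_tradeoff dA dB xf f"
    and "is_rate_function dA dB xf rate"
    and "convex_rate dA dB xf rate"
    and "1 < \<alpha>" and "\<alpha> < 2"
  shows "convex (QSet dA dB xf) \<and>
         convex_on (QSet dA dB xf)
           (\<lambda>p. Delta_f rate f p - (\<alpha> - 1) * V_f dA f p - (\<alpha> - 1)^2 * K_alpha dA dB xf \<alpha> f)"
proof -
  let ?Q = "QSet dA dB xf"
  have rate_minus_f: "convex_on ?Q (\<lambda>p. rate p - f p)"
    using assms(1,3) QSet_subset_prob_dists convex_QSet unfolding min_tradeoff_def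
    by (intro convex_on_diff convex_on_rate concave_on_affine_on_dists) auto
  have "concave_on ?Q (V_f dA f)"
    using concave_on_V_f QSet_subset_prob_dists convex_QSet unfolding concave_on_def
    by (rule convex_on_subset)
  then have V: "concave_on ?Q (\<lambda>p. (\<alpha> - 1) * V_f dA f p)"
    using assms(4) by (intro concave_on_cmul) auto
  have K: "concave_on ?Q (\<lambda>p. (\<alpha> - 1)^2 * K_alpha dA dB xf \<alpha> f)"
    using convex_QSet by (simp add: concave_on_const)
  show ?thesis
    unfolding Delta_f_def using convex_QSet convex_on_diff[OF convex_on_diff[OF rate_minus_f V] K] by simp
qed

end
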